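(* Let $\rho>0$ and $(l,m,n)\in\mathbb{Z}_+^3$ with $n+\min\{l,m\}\ge1$. With $\tau=\inf\{s\ge0:(a(s),b(s),c(s))\in\mathcal S\}$, $\mathcal S=\{(0,0,1),(1,1,0)\}$, $\mathbb{E}_{l,m,n,0}[s(\tau)]=\frac{\rho}{2}\mathbb{E}_{l,m,n,0}\Bigl[\int_0^\tau c(u)\,du\Bigr]=\frac{\rho}{2}\sum_{(l',m',n')\in\mathbb{Z}_+^3\setminus(\{\mathbf 0\}\cup\mathcal S)}\int_0^\infty n'\,\mathbb{P}_{l,m,n,0}[(a(u),b(u),c(u))=(l',m',n')]\,du$.
   Context: The ancestral chain $(a(t),b(t),c(t))$ with parameter $\rho$ is the continuous-time Markov chain on $\mathbb{Z}_+^3\setminus\{\mathbf 0\}$ which from $(a,b,c)$ jumps to $(a+1,b+1,c-1)$ at rate $c\rho/2$ (a recombination event), to $(a-1,b-1,c+1)$ at rate $ab$, to $(a-1,b,c)$ at rate $ac+a(a-1)/2$, to $(a,b-1,c)$ at rate $bc+b(b-1)/2$, and to $(a,b,c-1)$ at rate $c(c-1)/2$. $s(t)$ is the number of recombination jumps in $(0,t)$; subscript $l,m,n,0$ means initial state $(l,m,n)$ and $s(0)=0$. *)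

theory Defs
  imports "HOL-Probability.Probability"
begin

type_synonym state = "nat \<times> nat \<times> nat"

text \<open>Transitions out of state (a,b,c): list of (rate, (is_recombination, target)).\<close>
fun anc_rates :: "real \<Rightarrow> state \<Rightarrow> (real \<times> bool \<times> state) list" where
  "anc_rates \<rho> (a, b, c) =
     [ (real c * \<rho> / 2, (True, (a + 1, b + 1, c - 1))),
       (real a * real b, (False, (a - 1, b - 1, c + 1))),
       (real a * real c + real a * (real a - 1) / 2, (False, (a - 1, b, c))),
       (real b * real c + real b * (real b - 1) / 2, (False, (a, b - 1, c))),
       (real c * (real c - 1) / 2, (False, (a, b, c - 1))) ]"

definition anc_qtot :: "real \<Rightarrow> state \<Rightarrow> real" where
  "anc_qtot \<rho> x = sum_list (map fst (anc_rates \<rho> x))"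

text \<open>Inverse-CDF selection of a transition from a list of rates.\<close>
fun pick :: "(real \<times> 'a) list \<Rightarrow> real \<Rightarrow> 'a option" where
  "pick [] t = None"
| "pick ((r, y) # rs) t = (if t < r then Some y else pick rs (t - r))"

text \<open>Jump of the embedded chain from x driven by a uniform variable u in [0,1].\<close>
definition anc_jump :: "real \<Rightarrow> state \<Rightarrow> real \<Rightarrow> bool \<times> state" where
  "anc_jump \<rho> x u = (case pick (anc_rates \<rho> x) (u * anc_qtot \<rho> x) of
       None \<Rightarrow> (False, x) | Some z \<Rightarrow> z)"

definition anc_driver :: "(real \<times> real) stream measure" where
  "anc_driver = stream_space
     (uniform_measure lborel {0..1::real} \<Otimes>\<^sub>M density lborel (exponential_density 1))"

primrec anc_jc :: "real \<Rightarrow> state \<Rightarrow> (real \<times> real) stream \<Rightarrow> nat \<Rightarrow> state" where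
  "anc_jc \<rho> x0 \<omega> 0 = x0"
| "anc_jc \<rho> x0 \<omega> (Suc k) = snd (anc_jump \<rho> (anc_jc \<rho> x0 \<omega> k) (fst (\<omega> !! k)))"

text \<open>Whether the k-th jump (occurring at time anc_jt (Suc k)) is a recombination.\<close>
definition anc_recomb :: "real \<Rightarrow> state \<Rightarrow> (real \<times> real) stream \<Rightarrow> nat \<Rightarrow> bool" where
  "anc_recomb \<rho> x0 \<omega> k = fst (anc_jump \<rho> (anc_jc \<rho> x0 \<omega> k) (fst (\<omega> !! k)))"

definition anc_hold :: "real \<Rightarrow> state \<Rightarrow> (real \<times> real) stream \<Rightarrow> nat \<Rightarrow> ereal" where
  "anc_hold \<rho> x0 \<omega> k =
     (if anc_qtot \<rho> (anc_jc \<rho> x0 \<omega> k) = 0 then \<infinity>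
      else ereal (snd (\<omega> !! k) / anc_qtot \<rho> (anc_jc \<rho> x0 \<omega> k)))"

definition anc_jt :: "real \<Rightarrow> state \<Rightarrow> (real \<times> real) stream \<Rightarrow> nat \<Rightarrow> ereal" where
  "anc_jt \<rho> x0 \<omega> k = (\<Sum>i<k. anc_hold \<rho> x0 \<omega> i)"

text \<open>Position (a(t),b(t),c(t)) of the continuous-time chain (right-continuous);
  the dummy value (0,0,0) is used after a (null-probability) explosion.\<close>
definition anc_pos :: "real \<Rightarrow> state \<Rightarrow> (real \<times> real) stream \<Rightarrow> real \<Rightarrow> state" where
  "anc_pos \<rho> x0 \<omega> t =
     (if \<exists>k. ereal t < anc_jt \<rho> x0 \<omega> (Suc k)
      then anc_jc \<rho> x0 \<omega> (LEAST k. ereal t < anc_jt \<rho> x0 \<omega> (Suc k))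
      else (0, 0, 0))"

text \<open>s(t): number of recombination jumps in the open interval (0,t).\<close>
definition anc_nrec :: "real \<Rightarrow> state \<Rightarrow> (real \<times> real) stream \<Rightarrow> ereal \<Rightarrow> ennreal" where
  "anc_nrec \<rho> x0 \<omega> t =
     (\<Sum>k. if anc_recomb \<rho> x0 \<omega> k \<and> 0 < anc_jt \<rho> x0 \<omega> (Suc k) \<and> anc_jt \<rho> x0 \<omega> (Suc k) < t
          then 1 else 0)"

definition anc_S :: "state set" where
  "anc_S = {(0, 0, 1), (1, 1, 0)}"

definition anc_tau :: "real \<Rightarrow> state \<Rightarrow> (real \<times> real) stream \<Rightarrow> ereal" where
  "anc_tau \<rho> x0 \<omega> = Inf {ereal t | t. 0 \<le> t \<and> anc_pos \<rho> x0 \<omega> t \<in> anc_S}"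

end

theory Submission
  imports Defs
begin

text \<open>
  The chain is realised by a jump chain X_k driven by i.i.d. pairs (U_k, E_k): the k-th jump is
  chosen by U_k and lasts E_k / q(X_k). The set S is absorbing, so on every path the jumps before
  \<tau> are exactly those made from states outside S. Hence s(\<tau>) is the sum over k of the
  indicators [X_k \<notin> S, U_k q(X_k) < c_k \<rho>/2], and the integral of c(u) over [0, \<tau>) is the sum
  of [X_k \<notin> S] c_k E_k / q(X_k). Since (U_k, E_k) is independent of X_0, ..., X_k, the
  summands can be averaged over (U_k, E_k) first, giving c_k \<rho> / (2 q(X_k)) and c_k / q(X_k):
  they differ exactly by the factor \<rho>/2. The second identity is Tonelli's theorem, exchanging the
  expectation, the time integral and the sum over the states outside {0} \<union> S.
\<close>

section \<open>The driving randomness\<close>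

abbreviation anc_step :: "(real \<times> real) measure" where
  "anc_step \<equiv> uniform_measure lborel {0..1::real} \<Otimes>\<^sub>M density lborel (exponential_density 1)"

lemma sets_anc_driver[measurable_cong]: "sets anc_driver = sets (stream_space anc_step)"
  by (simp add: anc_driver_def)

lemma prob_space_uniform01: "prob_space (uniform_measure lborel {0..1::real})"
  by (intro prob_space_uniform_measure) auto

lemma prob_space_exponential1: "prob_space (density lborel (exponential_density 1))"
  by (rule prob_space_exponential_density) simp

lemma prob_space_anc_step: "prob_space anc_step"
proof -
  interpret U: prob_space "uniform_measure lborel {0..1::real}" by (rule prob_space_uniform01)
  interpret E: prob_space "density lborel (exponential_density 1)" by (rule prob_space_exponential1)
  interpret pair_prob_space "uniform_measure lborel {0..1::real}" "density lborel (exponential_density 1)" ..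
  show ?thesis by (rule prob_space_axioms)
qed

lemma prob_space_anc_driver: "prob_space anc_driver"
  unfolding anc_driver_def by (rule prob_space.prob_space_stream_space[OF prob_space_anc_step])

lemma AE_anc_step: "AE z in anc_step. fst z \<in> {0..1} \<and> snd z > 0"
proof -
  interpret U: prob_space "uniform_measure lborel {0..1::real}" by (rule prob_space_uniform01)
  interpret E: prob_space "density lborel (exponential_density 1)" by (rule prob_space_exponential1)
  interpret pair_sigma_finite "uniform_measure lborel {0..1::real}" "density lborel (exponential_density 1)" ..
  have "AE u in uniform_measure lborel {0..1::real}. u \<in> {0..1}"
    by (rule AE_uniform_measureI) auto
  moreover have "AE e in density lborel (exponential_density 1). e > 0"
  proof (subst AE_density)
    show "AE e in lborel. 0 < ennreal (exponential_density 1 e) \<longrightarrow> 0 < e"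
      using AE_lborel_singleton[of 0] by eventually_elim (auto simp: exponential_density_def)
  qed simp
  moreover have "{z \<in> space anc_step. fst z \<in> {0..1} \<and> snd z > 0} \<in> sets anc_step"
    by measurable
  ultimately show ?thesis
    by (intro AE_pair_measure) (auto elim!: eventually_mono)
qed

section \<open>Jump rates and single jumps\<close>

lemma anc_rates_nonneg:
  assumes "\<rho> \<ge> 0"
  shows "\<forall>p\<in>set (anc_rates \<rho> x). fst p \<ge> 0"
proof -
  obtain a b c where x: "x = (a, b, c)" by (cases x)
  have "real n * (real n - 1) / 2 \<ge> 0" for n :: nat by (cases n) auto
  from this[of a] this[of b] this[of c] show ?thesis
    using assms by (auto simp: x intro!: add_nonneg_nonneg)
qed

lemma anc_qtot_nonneg: "\<rho> \<ge> 0 \<Longrightarrow> anc_qtot \<rho> x \<ge> 0"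
  unfolding anc_qtot_def using anc_rates_nonneg[of \<rho> x] by (intro sum_list_nonneg) auto

lemma anc_qtot_ge_recomb_rate: "\<rho> \<ge> 0 \<Longrightarrow> anc_qtot \<rho> (a, b, c) \<ge> real c * \<rho> / 2"
  using anc_rates_nonneg[of \<rho> "(a, b, c)"] by (simp add: anc_qtot_def)

lemma anc_qtot_pos: "\<rho> > 0 \<Longrightarrow> snd (snd x) > 0 \<Longrightarrow> anc_qtot \<rho> x > 0"
proof -
  assume \<rho>: "\<rho> > 0" and "snd (snd x) > 0"
  moreover obtain a b c where x: "x = (a, b, c)" by (cases x)
  ultimately have "0 < real c * \<rho> / 2" by simp
  also have "\<dots> \<le> anc_qtot \<rho> x"
    using anc_qtot_ge_recomb_rate \<rho> x by simp
  finally show ?thesis .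
qed

lemma anc_qtot_S_pos: "\<rho> > 0 \<Longrightarrow> x \<in> anc_S \<Longrightarrow> anc_qtot \<rho> x > 0"
  unfolding anc_S_def anc_qtot_def by auto

lemma pick_zero_rates: "\<forall>p\<in>set rs. fst p = 0 \<Longrightarrow> pick rs 0 = None"
  by (induction rs) auto

lemma anc_jump_absorbing:
  assumes "\<rho> \<ge> 0" "anc_qtot \<rho> x = 0"
  shows "anc_jump \<rho> x u = (False, x)"
proof -
  have "\<forall>r\<in>set (map fst (anc_rates \<rho> x)). r = 0"
    using assms anc_rates_nonneg[OF assms(1), of x]
      sum_list_nonneg_eq_0_iff[of "map fst (anc_rates \<rho> x)"]
    by (auto simp: anc_qtot_def)
  then have "\<forall>p\<in>set (anc_rates \<rho> x). fst p = 0" by simp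
  then show ?thesis
    using assms(2) by (simp add: anc_jump_def pick_zero_rates)
qed

lemma pick_no_recomb: "\<forall>p\<in>set rs. \<not> fst (snd p) \<Longrightarrow> pick rs t = Some z \<Longrightarrow> \<not> fst z"
  by (induction rs arbitrary: t) (auto split: if_splits)

lemma anc_jump_eq: "anc_jump \<rho> (a, b, c) u =
   (if u * anc_qtot \<rho> (a, b, c) < real c * \<rho> / 2 then (True, (a + 1, b + 1, c - 1))
    else (case pick (tl (anc_rates \<rho> (a, b, c))) (u * anc_qtot \<rho> (a, b, c) - real c * \<rho> / 2) of
            None \<Rightarrow> (False, (a, b, c)) | Some z \<Rightarrow> z))"
  by (simp add: anc_jump_def del: anc_rates.simps) (simp add: Let_def)

lemma anc_jump_recomb_iff:
  "fst (anc_jump \<rho> (a, b, c) u) \<longleftrightarrow> u * anc_qtot \<rho> (a, b, c) < real c * \<rho> / 2"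
  unfolding anc_jump_eq using pick_no_recomb[of "tl (anc_rates \<rho> (a, b, c))"]
  by (auto split: option.splits)

lemma anc_jump_recomb_target:
  "fst (anc_jump \<rho> (a, b, c) u) \<Longrightarrow> snd (anc_jump \<rho> (a, b, c) u) = (a + 1, b + 1, c - 1)"
  using anc_jump_recomb_iff[of \<rho> a b c u] unfolding anc_jump_eq by auto

lemma anc_jump_S_closed:
  "\<rho> > 0 \<Longrightarrow> x \<in> anc_S \<Longrightarrow> u \<in> {0..1} \<Longrightarrow> snd (anc_jump \<rho> x u) \<in> anc_S"
  unfolding anc_S_def anc_jump_def anc_qtot_def by (auto split: option.splits if_splits)

lemma anc_jump_recomb_c_pos:
  assumes "\<rho> \<ge> 0" "u \<ge> 0" "fst (anc_jump \<rho> x u)"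
  shows "snd (snd x) > 0"
proof -
  obtain a b c where x: "x = (a, b, c)" by (cases x)
  have "0 \<le> u * anc_qtot \<rho> x" using assms anc_qtot_nonneg by simp
  also have "\<dots> < real c * \<rho> / 2" using assms(3) anc_jump_recomb_iff x by simp
  finally show ?thesis using x by (cases c) auto
qed

lemma anc_jump_recomb_notin_S:
  assumes "\<rho> \<ge> 0" "u \<ge> 0" "x \<notin> anc_S" "fst (anc_jump \<rho> x u)"
  shows "snd (anc_jump \<rho> x u) \<notin> anc_S"
proof -
  obtain a b c where x: "x = (a, b, c)" by (cases x)
  have "c > 0" using anc_jump_recomb_c_pos[OF assms(1,2,4)] x by simp
  then show ?thesis
    using anc_jump_recomb_target[of \<rho> a b c u] assms(3,4) x unfolding anc_S_def by auto
qed

section \<open>The embedded jump chain\<close>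

lemma measurable_pick:
  assumes "f \<in> borel_measurable M"
  shows "(\<lambda>\<omega>. pick rs (f \<omega>)) \<in> measurable M (count_space UNIV)"
  using assms
proof (induction rs arbitrary: f)
  case (Cons p rs)
  obtain r y where p: "p = (r, y)" by fastforce
  have "(\<lambda>\<omega>. f \<omega> - r) \<in> borel_measurable M" using Cons.prems by measurable
  with Cons have "(\<lambda>\<omega>. if f \<omega> < r then Some y else pick rs (f \<omega> - r)) \<in> measurable M (count_space UNIV)"
    by (intro measurable_If) auto
  then show ?case by (simp add: p)
qed simp

lemma measurable_anc_jump:
  assumes "f \<in> borel_measurable M"
  shows "(\<lambda>\<omega>. g (anc_jump \<rho> x (f \<omega>))) \<in> measurable M (count_space UNIV)"
proof -
  have "(\<lambda>u. pick (anc_rates \<rho> x) (u * anc_qtot \<rho> x)) \<in> measurable borel (count_space UNIV)"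
    by (rule measurable_pick) measurable
  from measurable_compose[OF this measurable_count_space, of "case_option (False, x) id"]
  have "(\<lambda>u. anc_jump \<rho> x u) \<in> measurable borel (count_space UNIV)"
    unfolding anc_jump_def id_def by simp
  from measurable_compose[OF measurable_compose[OF assms this] measurable_count_space, of g]
  show ?thesis by simp
qed

lemma measurable_anc_jc[measurable]:
  "(\<lambda>\<omega>. anc_jc \<rho> x0 \<omega> k) \<in> measurable anc_driver (count_space UNIV)"
proof (induction k)
  case (Suc k)
  have "(\<lambda>\<omega>. (\<lambda>x \<omega>. snd (anc_jump \<rho> x (fst (\<omega> !! k)))) (anc_jc \<rho> x0 \<omega> k) \<omega>)
      \<in> measurable anc_driver (count_space UNIV)"
    by (rule measurable_compose_countable[OF _ Suc], rule measurable_anc_jump) measurable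
  then show ?case by simp
qed simp

lemma measurable_at_anc_jc:
  assumes [measurable]: "\<And>x. f x \<in> measurable anc_driver N"
  shows "(\<lambda>\<omega>. f (anc_jc \<rho> x0 \<omega> k) \<omega>) \<in> measurable anc_driver N"
  by (rule measurable_compose_countable[OF assms measurable_anc_jc])

lemma measurable_anc_hold[measurable]:
  "(\<lambda>\<omega>. anc_hold \<rho> x0 \<omega> k) \<in> borel_measurable anc_driver"
  unfolding anc_hold_def
  by (rule measurable_at_anc_jc[where f = "\<lambda>x \<omega>. if anc_qtot \<rho> x = 0 then \<infinity> else ereal (snd (\<omega> !! k) / anc_qtot \<rho> x)"])
    measurable

lemma measurable_anc_jt[measurable]:
  "(\<lambda>\<omega>. anc_jt \<rho> x0 \<omega> k) \<in> borel_measurable anc_driver"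
  unfolding anc_jt_def by measurable

lemma measurable_anc_pos[measurable]:
  "(\<lambda>p. anc_pos \<rho> x0 (fst p) (snd p)) \<in> measurable (anc_driver \<Otimes>\<^sub>M lborel) (count_space UNIV)"
proof -
  have "(\<lambda>p. LEAST k. ereal (snd p) < anc_jt \<rho> x0 (fst p) (Suc k))
      \<in> measurable (anc_driver \<Otimes>\<^sub>M lborel) (count_space UNIV)"
    by measurable
  then have "(\<lambda>p. anc_jc \<rho> x0 (fst p) (LEAST k. ereal (snd p) < anc_jt \<rho> x0 (fst p) (Suc k)))
      \<in> measurable (anc_driver \<Otimes>\<^sub>M lborel) (count_space UNIV)"
    by (rule measurable_compose_countable[where f = "\<lambda>k p. anc_jc \<rho> x0 (fst p) k", rotated])
      measurable
  then show ?thesis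
    unfolding anc_pos_def by measurable
qed

lemma measurable_anc_pos_swap[measurable]:
  "(\<lambda>p. anc_pos \<rho> x0 (snd p) (fst p)) \<in> measurable (lborel \<Otimes>\<^sub>M anc_driver) (count_space UNIV)"
  using measurable_compose[OF measurable_pair_swap' measurable_anc_pos] by (simp add: split_beta')

lemma measurable_anc_pos_slice[measurable]:
  "(\<lambda>\<omega>. anc_pos \<rho> x0 \<omega> u) \<in> measurable anc_driver (count_space UNIV)"
proof -
  have "(\<lambda>\<omega>. (\<omega>, u)) \<in> measurable anc_driver (anc_driver \<Otimes>\<^sub>M lborel)"
    by measurable
  from measurable_compose[OF this measurable_anc_pos] show ?thesis by simp
qed

lemma anc_jc_Suc_shift:
  "anc_jc \<rho> x0 \<omega> (Suc k) = anc_jc \<rho> (snd (anc_jump \<rho> x0 (fst (shd \<omega>)))) (stl \<omega>) k"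
  by (induction k) auto

text \<open>The driver \<omega> !! k is independent of anc_jc \<rho> x0 \<omega> k, which only depends on the first k
  drivers; the proof peels off the head of the stream, which is where the chain's first jump comes from.\<close>
lemma nn_integral_anc_jc_fresh:
  assumes [measurable]: "\<And>x. g x \<in> borel_measurable anc_step"
  shows "(\<integral>\<^sup>+\<omega>. g (anc_jc \<rho> x0 \<omega> k) (\<omega> !! k) \<partial>anc_driver) =
         (\<integral>\<^sup>+\<omega>. (\<integral>\<^sup>+z. g (anc_jc \<rho> x0 \<omega> k) z \<partial>anc_step) \<partial>anc_driver)"
proof (induction k arbitrary: x0)
  case 0
  interpret prob_space anc_step by (rule prob_space_anc_step)
  interpret D: prob_space anc_driver by (rule prob_space_anc_driver)
  show ?case
    by (simp add: anc_driver_def nn_integral_stream_space D.emeasure_space_1[unfolded anc_driver_def])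
next
  case (Suc k)
  interpret prob_space anc_step by (rule prob_space_anc_step)
  let ?x1 = "\<lambda>z. snd (anc_jump \<rho> x0 (fst z))"
  have lhs_meas: "(\<lambda>\<omega>. g (anc_jc \<rho> x0 \<omega> (Suc k)) (\<omega> !! Suc k)) \<in> borel_measurable (stream_space anc_step)"
    and rhs_meas: "(\<lambda>\<omega>. \<integral>\<^sup>+z. g (anc_jc \<rho> x0 \<omega> (Suc k)) z \<partial>anc_step) \<in> borel_measurable (stream_space anc_step)"
    unfolding anc_driver_def[symmetric] by (rule measurable_at_anc_jc, measurable)+
  have "(\<integral>\<^sup>+\<omega>. g (anc_jc \<rho> x0 \<omega> (Suc k)) (\<omega> !! Suc k) \<partial>anc_driver) =
      (\<integral>\<^sup>+z. (\<integral>\<^sup>+\<omega>. g (anc_jc \<rho> (?x1 z) \<omega> k) (\<omega> !! k) \<partial>anc_driver) \<partial>anc_step)"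
    using nn_integral_stream_space[OF lhs_meas] unfolding anc_jc_Suc_shift by (simp add: anc_driver_def)
  also have "\<dots> = (\<integral>\<^sup>+z. (\<integral>\<^sup>+\<omega>. (\<integral>\<^sup>+z'. g (anc_jc \<rho> (?x1 z) \<omega> k) z' \<partial>anc_step) \<partial>anc_driver) \<partial>anc_step)"
    by (simp add: Suc.IH)
  also have "\<dots> = (\<integral>\<^sup>+\<omega>. (\<integral>\<^sup>+z. g (anc_jc \<rho> x0 \<omega> (Suc k)) z \<partial>anc_step) \<partial>anc_driver)"
    using nn_integral_stream_space[OF rhs_meas] unfolding anc_jc_Suc_shift by (simp add: anc_driver_def)
  finally show ?case .
qed

section \<open>Averaging a single step\<close>

lemma nn_integral_anc_step_fst:
  assumes [measurable]: "f \<in> borel_measurable borel"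
  shows "(\<integral>\<^sup>+z. f (fst z) \<partial>anc_step) = (\<integral>\<^sup>+u. f u \<partial>uniform_measure lborel {0..1::real})"
proof -
  interpret E: prob_space "density lborel (exponential_density 1)" by (rule prob_space_exponential1)
  have "emeasure (density lborel (exponential_density 1)) UNIV = 1"
    using E.emeasure_space_1 by simp
  then show ?thesis
    by (subst E.nn_integral_fst[symmetric]) simp_all
qed

lemma nn_integral_anc_step_snd:
  assumes [measurable]: "f \<in> borel_measurable borel"
  shows "(\<integral>\<^sup>+z. f (snd z) \<partial>anc_step) = (\<integral>\<^sup>+e. f e \<partial>density lborel (exponential_density 1))"
proof -
  interpret U: prob_space "uniform_measure lborel {0..1::real}" by (rule prob_space_uniform01)
  interpret E: prob_space "density lborel (exponential_density 1)" by (rule prob_space_exponential1)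
  interpret pair_sigma_finite "uniform_measure lborel {0..1::real}" "density lborel (exponential_density 1)" ..
  show ?thesis
    by (subst nn_integral_snd[symmetric]) (simp_all add: U.emeasure_space_1)
qed

lemma emeasure_uniform01_scaled_below:
  fixes Q r :: real
  assumes "0 \<le> r" "r \<le> Q"
  shows "emeasure (uniform_measure lborel {0..1}) {u. u * Q < r} = ennreal (r / Q)"
proof (cases "Q = 0")
  case True
  then show ?thesis using assms by simp
next
  case False
  then have "Q > 0" using assms by simp
  then have "{0..1} \<inter> {u. u * Q < r} = {0..<r / Q}"
    using assms by (auto simp: field_simps) (smt (verit) mult_le_cancel_right1)
  then show ?thesis
    using \<open>Q > 0\<close> assms by (simp add: divide_ennreal_def)
qed

lemma nn_integral_exponential1_mean:
  "(\<integral>\<^sup>+e. ennreal e \<partial>density lborel (exponential_density 1)) = 1"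
proof -
  have "(\<integral>\<^sup>+e. ennreal e \<partial>density lborel (exponential_density 1))
      = (\<integral>\<^sup>+e. ennreal (erlang_density 0 1 e * e ^ 1) \<partial>lborel)"
    by (subst nn_integral_density)
      (auto intro!: nn_integral_cong simp: ennreal_mult'[symmetric] exponential_density_def)
  also have "\<dots> = 1"
    by (subst nn_integral_erlang_ith_moment) auto
  finally show ?thesis .
qed

definition anc_c_off_S :: "state \<Rightarrow> ennreal" where
  "anc_c_off_S x = (if x \<in> anc_S then 0 else of_nat (snd (snd x)))"

text \<open>What a single step of the jump chain from x, driven by z = (U, E), contributes before
  S is hit: a recombination count, and c times the holding time E / q(x).\<close>
definition anc_recomb_step :: "real \<Rightarrow> state \<Rightarrow> real \<times> real \<Rightarrow> ennreal" where
  "anc_recomb_step \<rho> x z = (if x \<notin> anc_S \<and> fst (anc_jump \<rho> x (fst z)) then 1 else 0)"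

definition anc_c_time_step :: "real \<Rightarrow> state \<Rightarrow> real \<times> real \<Rightarrow> ennreal" where
  "anc_c_time_step \<rho> x z = anc_c_off_S x * ennreal (snd z / anc_qtot \<rho> x)"

lemma measurable_anc_recomb_step[measurable]: "anc_recomb_step \<rho> x \<in> borel_measurable anc_step"
proof -
  have "(\<lambda>z. fst (anc_jump \<rho> x (fst z))) \<in> measurable anc_step (count_space UNIV)"
    by (rule measurable_anc_jump) measurable
  then have [measurable]: "Measurable.pred anc_step (\<lambda>z. fst (anc_jump \<rho> x (fst z)))"
    by (simp add: pred_def)
  show ?thesis
    unfolding anc_recomb_step_def[abs_def] by measurable
qed

lemma measurable_anc_c_time_step[measurable]: "anc_c_time_step \<rho> x \<in> borel_measurable anc_step"
  unfolding anc_c_time_step_def[abs_def] by measurable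

lemma nn_integral_anc_recomb_step:
  assumes "\<rho> \<ge> 0"
  shows "(\<integral>\<^sup>+z. anc_recomb_step \<rho> x z \<partial>anc_step)
       = (if x \<in> anc_S then 0 else ennreal (real (snd (snd x)) * \<rho> / 2 / anc_qtot \<rho> x))"
proof -
  obtain a b c where x: "x = (a, b, c)" by (cases x)
  let ?q = "anc_qtot \<rho> (a, b, c)" and ?r = "real c * \<rho> / 2"
  have "anc_recomb_step \<rho> (a, b, c) z
      = (if (a, b, c) \<in> anc_S then 0 else indicator {u. u * ?q < ?r} (fst z))" for z
    by (simp add: anc_recomb_step_def anc_jump_recomb_iff)
  then have "(\<integral>\<^sup>+z. anc_recomb_step \<rho> (a, b, c) z \<partial>anc_step)
      = (if (a, b, c) \<in> anc_S then 0 else emeasure (uniform_measure lborel {0..1}) {u. u * ?q < ?r})"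
    by (simp add: nn_integral_anc_step_fst)
  also have "emeasure (uniform_measure lborel {0..1}) {u. u * ?q < ?r} = ennreal (?r / ?q)"
    using assms anc_qtot_ge_recomb_rate by (intro emeasure_uniform01_scaled_below) auto
  finally show ?thesis
    by (simp add: x)
qed

lemma nn_integral_anc_c_time_step:
  assumes "\<rho> \<ge> 0"
  shows "(\<integral>\<^sup>+z. anc_c_time_step \<rho> x z \<partial>anc_step) = anc_c_off_S x * ennreal (1 / anc_qtot \<rho> x)"
proof -
  have "(\<integral>\<^sup>+z. anc_c_time_step \<rho> x z \<partial>anc_step)
      = anc_c_off_S x * (\<integral>\<^sup>+e. ennreal (e / anc_qtot \<rho> x) \<partial>density lborel (exponential_density 1))"
    unfolding anc_c_time_step_def
    by (simp add: nn_integral_cmult nn_integral_anc_step_snd[where f = "\<lambda>e. ennreal (e / anc_qtot \<rho> x)"])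
  also have "(\<integral>\<^sup>+e. ennreal (e / anc_qtot \<rho> x) \<partial>density lborel (exponential_density 1))
      = (\<integral>\<^sup>+e. ennreal (1 / anc_qtot \<rho> x) * ennreal e \<partial>density lborel (exponential_density 1))"
    using assms anc_qtot_nonneg
    by (intro nn_integral_cong) (simp add: ennreal_mult'[symmetric])
  also have "\<dots> = ennreal (1 / anc_qtot \<rho> x)"
    by (simp add: nn_integral_cmult nn_integral_exponential1_mean)
  finally show ?thesis .
qed

lemma nn_integral_anc_recomb_step_eq_scaled_c_time:
  assumes "\<rho> \<ge> 0"
  shows "(\<integral>\<^sup>+z. anc_recomb_step \<rho> x z \<partial>anc_step) = ennreal (\<rho> / 2) * (\<integral>\<^sup>+z. anc_c_time_step \<rho> x z \<partial>anc_step)"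
  using assms anc_qtot_nonneg[OF assms, of x]
  by (simp add: nn_integral_anc_recomb_step nn_integral_anc_c_time_step anc_c_off_S_def
      ennreal_of_nat_eq_real_of_nat ennreal_mult[symmetric])

section \<open>Sample paths\<close>

locale anc_sample_path =
  fixes \<rho> :: real and x0 :: state and \<omega> :: "(real \<times> real) stream"
  assumes rho_pos: "\<rho> > 0"
    and uniform_range: "\<And>k. fst (\<omega> !! k) \<in> {0..1}"
    and exponential_pos: "\<And>k. snd (\<omega> !! k) > 0"
begin

abbreviation X :: "nat \<Rightarrow> state" where "X \<equiv> anc_jc \<rho> x0 \<omega>"
abbreviation q :: "nat \<Rightarrow> real" where "q k \<equiv> anc_qtot \<rho> (X k)"
abbreviation jt :: "nat \<Rightarrow> ereal" where "jt \<equiv> anc_jt \<rho> x0 \<omega>"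
abbreviation pos :: "real \<Rightarrow> state" where "pos \<equiv> anc_pos \<rho> x0 \<omega>"
abbreviation tau :: ereal where "tau \<equiv> anc_tau \<rho> x0 \<omega>"

definition sojourn :: "nat \<Rightarrow> real set" where
  "sojourn k = {u. jt k \<le> ereal u \<and> ereal u < jt (Suc k)}"

lemma q_nonneg: "q k \<ge> 0"
  using anc_qtot_nonneg rho_pos by simp

lemma hold_pos: "anc_hold \<rho> x0 \<omega> k > 0"
  using q_nonneg[of k] exponential_pos[of k] by (auto simp: anc_hold_def)

lemma jt_Suc: "jt (Suc k) = jt k + anc_hold \<rho> x0 \<omega> k"
  by (simp add: anc_jt_def)

lemma jt_nonneg: "jt k \<ge> 0"
  unfolding anc_jt_def using hold_pos by (intro sum_nonneg) (simp add: order_less_imp_le)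

lemma incseq_jt: "incseq jt"
proof (rule incseq_SucI)
  fix k
  have "jt k + 0 \<le> jt k + anc_hold \<rho> x0 \<omega> k"
    using hold_pos[of k] by (intro add_left_mono) simp
  then show "jt k \<le> jt (Suc k)" by (simp add: jt_Suc)
qed

lemma jt_less_Suc: "jt k \<noteq> \<infinity> \<Longrightarrow> jt k < jt (Suc k)"
  using hold_pos[of k] jt_nonneg[of k] by (cases "jt k"; cases "anc_hold \<rho> x0 \<omega> k") (auto simp: jt_Suc)

lemma X_absorbed: "j \<le> k \<Longrightarrow> q j = 0 \<Longrightarrow> X k = X j"
  by (induction k rule: dec_induct) (use anc_jump_absorbing rho_pos in auto)

lemma jt_finite:
  assumes "q k > 0"
  shows "\<exists>r. jt k = ereal r \<and> jt (Suc k) = ereal (r + snd (\<omega> !! k) / q k)"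
  using assms
proof (induction k)
  case (Suc k)
  have "q k \<noteq> 0"
    using X_absorbed[of k "Suc k"] Suc.prems by auto
  then have "q k > 0" using q_nonneg[of k] by simp
  with Suc.IH Suc.prems show ?case
    by (auto simp: jt_Suc anc_hold_def)
qed (simp add: anc_jt_def anc_hold_def)

lemma S_closed: "j \<le> k \<Longrightarrow> X j \<in> anc_S \<Longrightarrow> X k \<in> anc_S"
  by (induction k rule: dec_induct) (use anc_jump_S_closed rho_pos uniform_range in auto)

lemma sojourn_nonneg: "u \<in> sojourn k \<Longrightarrow> 0 \<le> u"
proof -
  assume "u \<in> sojourn k"
  then have "jt k \<le> ereal u" by (simp add: sojourn_def)
  from order_trans[OF jt_nonneg this] show ?thesis by simp
qed

lemma sojourn_unique: "u \<in> sojourn j \<Longrightarrow> u \<in> sojourn k \<Longrightarrow> j = k"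
proof (rule ccontr)
  assume u: "u \<in> sojourn j" "u \<in> sojourn k" and "j \<noteq> k"
  then consider "j < k" | "k < j" by linarith
  then show False
  proof cases
    case 1
    then have "jt (Suc j) \<le> jt k" by (intro incseqD[OF incseq_jt]) simp
    with u show False by (auto simp: sojourn_def)
  next
    case 2
    then have "jt (Suc k) \<le> jt j" by (intro incseqD[OF incseq_jt]) simp
    with u show False by (auto simp: sojourn_def)
  qed
qed

lemma sojourn_before:
  assumes "0 \<le> u" "ereal u < jt (Suc k)"
  shows "\<exists>j\<le>k. u \<in> sojourn j"
proof -
  define j where "j = (LEAST j. ereal u < jt (Suc j))"
  have "j \<le> k" "ereal u < jt (Suc j)"
    using Least_le[where P = "\<lambda>j. ereal u < jt (Suc j)", OF assms(2)]
      LeastI[where P = "\<lambda>j. ereal u < jt (Suc j)", OF assms(2)]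
    unfolding j_def by simp_all
  moreover have "jt j \<le> ereal u"
  proof (cases j)
    case 0 then show ?thesis using assms(1) by (simp add: anc_jt_def)
  next
    case (Suc i)
    then show ?thesis using not_less_Least[of i "\<lambda>j. ereal u < jt (Suc j)"] j_def by simp
  qed
  ultimately show ?thesis by (auto simp: sojourn_def)
qed

lemma pos_sojourn: "u \<in> sojourn k \<Longrightarrow> pos u = X k"
proof -
  assume u: "u \<in> sojourn k"
  have "(LEAST j. ereal u < jt (Suc j)) = k"
  proof (rule Least_equality)
    show "ereal u < jt (Suc k)" using u by (simp add: sojourn_def)
  next
    fix j assume "ereal u < jt (Suc j)"
    then obtain i where "i \<le> j" "u \<in> sojourn i" using sojourn_before sojourn_nonneg[OF u] by blast
    then show "k \<le> j" using sojourn_unique[OF u] by simp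
  qed
  then show ?thesis using u by (auto simp: anc_pos_def sojourn_def)
qed

lemma pos_exploded:
  assumes "0 \<le> u" "\<And>k. u \<notin> sojourn k"
  shows "pos u = (0, 0, 0)"
proof -
  have "\<not> (\<exists>k. ereal u < jt (Suc k))" using sojourn_before assms by blast
  then show ?thesis by (simp add: anc_pos_def)
qed

lemma pos_series:
  fixes f :: "state \<Rightarrow> ennreal"
  assumes "f (0, 0, 0) = 0"
  shows "(if 0 \<le> u then f (pos u) else 0) = (\<Sum>k. indicator (sojourn k) u * f (X k))"
proof (cases "\<exists>k. u \<in> sojourn k")
  case True
  then obtain k where k: "u \<in> sojourn k" by blast
  have "indicator (sojourn j) u * f (X j) = (if j = k then f (X k) else 0)" for j
    using sojourn_unique[OF k, of j] k by (cases "j = k") (auto simp: indicator_def)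
  then have "(\<lambda>j. indicator (sojourn j) u * f (X j)) sums f (X k)"
    using sums_single[of k "\<lambda>_. f (X k)"] by simp
  moreover have "(if 0 \<le> u then f (pos u) else 0) = f (X k)"
    using sojourn_nonneg[OF k] pos_sojourn[OF k] by simp
  ultimately show ?thesis by (simp add: sums_iff)
next
  case False
  then have "(if 0 \<le> u then f (pos u) else 0) = 0"
    using pos_exploded[of u] assms by auto
  moreover have "indicator (sojourn k) u = (0::ennreal)" for k
    using False by simp
  ultimately show ?thesis by simp
qed

lemma tau_lower: "X k \<notin> anc_S \<Longrightarrow> jt (Suc k) \<le> tau"
  unfolding anc_tau_def
proof (rule Inf_greatest, clarify)
  fix t assume k: "X k \<notin> anc_S" and t: "0 \<le> t" "pos t \<in> anc_S"
  show "jt (Suc k) \<le> ereal t"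
  proof (rule ccontr)
    assume "\<not> jt (Suc k) \<le> ereal t"
    then obtain j where "j \<le> k" "t \<in> sojourn j"
      using sojourn_before[OF t(1)] by (auto simp: not_le)
    then show False using t pos_sojourn S_closed k by metis
  qed
qed

lemma tau_upper:
  assumes "X k \<in> anc_S" "jt k = ereal t"
  shows "tau \<le> jt k"
proof -
  have "t \<in> sojourn k"
    using assms(2) jt_less_Suc[of k] by (simp add: sojourn_def)
  then have "ereal t \<in> {ereal t |t. 0 \<le> t \<and> pos t \<in> anc_S}"
    using assms(1) sojourn_nonneg pos_sojourn by auto
  then show ?thesis unfolding anc_tau_def assms(2) by (rule Inf_lower)
qed

lemma before_tau_iff:
  assumes "u \<in> sojourn k"
  shows "ereal u < tau \<longleftrightarrow> X k \<notin> anc_S"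
proof
  assume "X k \<notin> anc_S"
  then show "ereal u < tau" using tau_lower assms by (auto simp: sojourn_def intro: less_le_trans)
next
  assume u: "ereal u < tau"
  show "X k \<notin> anc_S"
  proof
    assume S: "X k \<in> anc_S"
    obtain t where t: "jt k = ereal t"
      using assms jt_nonneg[of k] by (cases "jt k") (auto simp: sojourn_def)
    have "tau \<le> jt k" by (rule tau_upper[OF S t])
    also have "\<dots> \<le> ereal u" using assms by (simp add: sojourn_def)
    finally show False using u by simp
  qed
qed

text \<open>Before \<tau> the chain is outside S; after an explosion it sits at (0, 0, 0), where c = 0.\<close>
lemma occupation_before_tau:
  "indicator {u. 0 \<le> u \<and> ereal u < tau} u * of_nat (snd (snd (pos u)))
     = (if 0 \<le> u then anc_c_off_S (pos u) else 0)"
proof (cases "\<exists>k. u \<in> sojourn k")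
  case True
  then obtain k where k: "u \<in> sojourn k" by blast
  then show ?thesis
    using before_tau_iff[OF k] sojourn_nonneg[OF k] pos_sojourn[OF k]
    by (simp add: anc_c_off_S_def)
next
  case False
  then have "0 \<le> u \<Longrightarrow> pos u = (0, 0, 0)" using pos_exploded by blast
  then show ?thesis by (simp add: anc_c_off_S_def anc_S_def indicator_def)
qed

lemma recomb_before_tau_iff:
  "(anc_recomb \<rho> x0 \<omega> k \<and> 0 < jt (Suc k) \<and> jt (Suc k) < tau)
     \<longleftrightarrow> X k \<notin> anc_S \<and> fst (anc_jump \<rho> (X k) (fst (\<omega> !! k)))"
proof
  assume recomb: "anc_recomb \<rho> x0 \<omega> k \<and> 0 < jt (Suc k) \<and> jt (Suc k) < tau"
  have "X k \<notin> anc_S"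
  proof
    assume S: "X k \<in> anc_S"
    then have "q k > 0" using anc_qtot_S_pos rho_pos by simp
    then obtain t where "jt k = ereal t" using jt_finite by blast
    then have "tau \<le> jt (Suc k)"
      using tau_upper[OF S] incseqD[OF incseq_jt, of k "Suc k"] by force
    then show False using recomb by (meson leD)
  qed
  then show "X k \<notin> anc_S \<and> fst (anc_jump \<rho> (X k) (fst (\<omega> !! k)))"
    using recomb by (simp add: anc_recomb_def)
next
  let ?u = "fst (\<omega> !! k)"
  assume jump: "X k \<notin> anc_S \<and> fst (anc_jump \<rho> (X k) ?u)"
  have u: "0 \<le> ?u" using uniform_range[of k] by simp
  have "snd (snd (X k)) > 0"
    using anc_jump_recomb_c_pos[OF _ u] jump rho_pos by (meson less_imp_le)
  then have "q k > 0" using anc_qtot_pos rho_pos by simp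
  then obtain r where r: "jt k = ereal r" "jt (Suc k) = ereal (r + snd (\<omega> !! k) / q k)"
    using jt_finite by blast
  have "0 < jt (Suc k)"
    using r jt_nonneg[of k] exponential_pos[of k] \<open>q k > 0\<close> by (simp add: add_nonneg_pos)
  moreover have "X (Suc k) \<notin> anc_S"
    using anc_jump_recomb_notin_S[OF _ u] jump rho_pos by simp
  then have "jt (Suc k) < tau"
    using jt_less_Suc[of "Suc k"] tau_lower[of "Suc k"] r by simp
  ultimately show "anc_recomb \<rho> x0 \<omega> k \<and> 0 < jt (Suc k) \<and> jt (Suc k) < tau"
    using jump by (simp add: anc_recomb_def)
qed

lemma nrec_tau_eq: "anc_nrec \<rho> x0 \<omega> tau = (\<Sum>k. anc_recomb_step \<rho> (X k) (\<omega> !! k))"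
  unfolding anc_nrec_def anc_recomb_step_def recomb_before_tau_iff ..

lemma emeasure_sojourn_weighted: "anc_c_off_S (X k) * emeasure lborel (sojourn k) = anc_c_time_step \<rho> (X k) (\<omega> !! k)"
proof (cases "anc_c_off_S (X k) = 0")
  case False
  then have "q k > 0"
    using rho_pos anc_qtot_pos[of \<rho> "X k"] by (simp add: anc_c_off_S_def split: if_splits)
  then obtain r where r: "jt k = ereal r" "jt (Suc k) = ereal (r + snd (\<omega> !! k) / q k)"
    using jt_finite by blast
  then have "sojourn k = {r ..< r + snd (\<omega> !! k) / q k}" by (auto simp: sojourn_def)
  then show ?thesis
    using \<open>q k > 0\<close> exponential_pos[of k] by (simp add: anc_c_time_step_def)
qed (simp add: anc_c_time_step_def)

lemma occupation_integral_eq: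
  "(\<integral>\<^sup>+u. indicator {u. 0 \<le> u \<and> ereal u < tau} u * of_nat (snd (snd (pos u))) \<partial>lborel)
     = (\<Sum>k. anc_c_time_step \<rho> (X k) (\<omega> !! k))"
proof -
  have sojourn_sets[measurable]: "sojourn k \<in> sets lborel" for k
    unfolding sojourn_def by measurable
  have "(\<integral>\<^sup>+u. indicator {u. 0 \<le> u \<and> ereal u < tau} u * of_nat (snd (snd (pos u))) \<partial>lborel)
      = (\<integral>\<^sup>+u. (\<Sum>k. indicator (sojourn k) u * anc_c_off_S (X k)) \<partial>lborel)"
    unfolding occupation_before_tau by (subst pos_series) (simp_all add: anc_c_off_S_def anc_S_def)
  also have "\<dots> = (\<Sum>k. \<integral>\<^sup>+u. anc_c_off_S (X k) * indicator (sojourn k) u \<partial>lborel)"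
    by (subst nn_integral_suminf) (simp_all add: mult.commute)
  also have "\<dots> = (\<Sum>k. anc_c_time_step \<rho> (X k) (\<omega> !! k))"
    by (simp add: nn_integral_cmult_indicator[OF sojourn_sets] emeasure_sojourn_weighted)
  finally show ?thesis .
qed

end

section \<open>Expectations\<close>

lemma AE_anc_sample_path:
  assumes "\<rho> > 0"
  shows "AE \<omega> in anc_driver. anc_sample_path \<rho> \<omega>"
proof -
  interpret prob_space anc_step by (rule prob_space_anc_step)
  have "AE \<omega> in stream_space anc_step. stream_all (\<lambda>z. fst z \<in> {0..1} \<and> snd z > 0) \<omega>"
    using AE_anc_step by (intro AE_stream_all) auto
  then show ?thesis
    using assms unfolding anc_driver_def stream_all_def sset_range
    by (auto simp: anc_sample_path_def elim!: eventually_mono)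
qed

lemma nn_integral_suminf_anc_jc_fresh:
  assumes [measurable]: "\<And>x. g x \<in> borel_measurable anc_step"
  shows "(\<integral>\<^sup>+\<omega>. (\<Sum>k. g (anc_jc \<rho> x0 \<omega> k) (\<omega> !! k)) \<partial>anc_driver)
       = (\<Sum>k. \<integral>\<^sup>+\<omega>. (\<integral>\<^sup>+z. g (anc_jc \<rho> x0 \<omega> k) z \<partial>anc_step) \<partial>anc_driver)"
proof -
  have "(\<lambda>\<omega>. g (anc_jc \<rho> x0 \<omega> k) (\<omega> !! k)) \<in> borel_measurable anc_driver" for k
    by (rule measurable_at_anc_jc) measurable
  then show ?thesis
    by (simp add: nn_integral_suminf nn_integral_anc_jc_fresh)
qed

lemma expected_recombinations_before_tau:
  assumes rho: "\<rho> > 0"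
  shows "(\<integral>\<^sup>+\<omega>. anc_nrec \<rho> x0 \<omega> (anc_tau \<rho> x0 \<omega>) \<partial>anc_driver)
       = ennreal (\<rho> / 2) *
         (\<integral>\<^sup>+\<omega>. (\<integral>\<^sup>+u. indicator {u. 0 \<le> u \<and> ereal u < anc_tau \<rho> x0 \<omega>} u
                    * of_nat (snd (snd (anc_pos \<rho> x0 \<omega> u))) \<partial>lborel) \<partial>anc_driver)"
proof -
  let ?mean = "\<lambda>g \<omega> k. \<integral>\<^sup>+z. g \<rho> (anc_jc \<rho> x0 \<omega> k) z \<partial>anc_step"
  have [measurable]: "(\<lambda>\<omega>. ?mean anc_c_time_step \<omega> k) \<in> borel_measurable anc_driver" for k
    by (rule measurable_at_anc_jc[where f = "\<lambda>x \<omega>. \<integral>\<^sup>+z. anc_c_time_step \<rho> x z \<partial>anc_step"]) measurable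
  have "(\<integral>\<^sup>+\<omega>. anc_nrec \<rho> x0 \<omega> (anc_tau \<rho> x0 \<omega>) \<partial>anc_driver)
      = (\<integral>\<^sup>+\<omega>. (\<Sum>k. anc_recomb_step \<rho> (anc_jc \<rho> x0 \<omega> k) (\<omega> !! k)) \<partial>anc_driver)"
    using AE_anc_sample_path[OF rho]
    by (intro nn_integral_cong_AE) (auto elim!: eventually_mono intro: anc_sample_path.nrec_tau_eq)
  also have "\<dots> = (\<Sum>k. \<integral>\<^sup>+\<omega>. ?mean anc_recomb_step \<omega> k \<partial>anc_driver)"
    by (rule nn_integral_suminf_anc_jc_fresh) measurable
  also have "\<dots> = (\<Sum>k. \<integral>\<^sup>+\<omega>. ennreal (\<rho> / 2) * ?mean anc_c_time_step \<omega> k \<partial>anc_driver)"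
    using rho by (simp add: nn_integral_anc_recomb_step_eq_scaled_c_time)
  also have "\<dots> = ennreal (\<rho> / 2) * (\<Sum>k. \<integral>\<^sup>+\<omega>. ?mean anc_c_time_step \<omega> k \<partial>anc_driver)"
    by (simp add: nn_integral_cmult)
  also have "(\<Sum>k. \<integral>\<^sup>+\<omega>. ?mean anc_c_time_step \<omega> k \<partial>anc_driver)
      = (\<integral>\<^sup>+\<omega>. (\<Sum>k. anc_c_time_step \<rho> (anc_jc \<rho> x0 \<omega> k) (\<omega> !! k)) \<partial>anc_driver)"
    by (rule nn_integral_suminf_anc_jc_fresh[symmetric]) measurable
  also have "\<dots> = (\<integral>\<^sup>+\<omega>. (\<integral>\<^sup>+u. indicator {u. 0 \<le> u \<and> ereal u < anc_tau \<rho> x0 \<omega>} u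
                    * of_nat (snd (snd (anc_pos \<rho> x0 \<omega> u))) \<partial>lborel) \<partial>anc_driver)"
    using AE_anc_sample_path[OF rho]
    by (intro nn_integral_cong_AE)
      (auto elim!: eventually_mono simp: anc_sample_path.occupation_integral_eq)
  finally show ?thesis .
qed

lemma anc_c_off_S_as_state_sum:
  "anc_c_off_S p = (\<integral>\<^sup>+y. of_nat (snd (snd y)) * indicator {y} p \<partial>count_space (UNIV - {(0, 0, 0)} - anc_S))"
proof (cases "p \<in> UNIV - {(0, 0, 0)} - anc_S")
  case True
  have "(\<integral>\<^sup>+y. of_nat (snd (snd y)) * indicator {y} p \<partial>count_space (UNIV - {(0, 0, 0)} - anc_S))
      = (\<integral>\<^sup>+y. of_nat (snd (snd p)) * indicator {p} y \<partial>count_space (UNIV - {(0, 0, 0)} - anc_S))"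
    by (intro nn_integral_cong) (auto simp: indicator_def)
  then show ?thesis
    using True by (simp add: anc_c_off_S_def nn_integral_cmult_indicator emeasure_count_space)
next
  case False
  then have "(\<integral>\<^sup>+y. of_nat (snd (snd y)) * indicator {y} p \<partial>count_space (UNIV - {(0, 0, 0)} - anc_S)) = 0"
    by (intro nn_integral_zero') (auto simp: indicator_def)
  then show ?thesis
    using False by (auto simp: anc_c_off_S_def)
qed

lemma occupation_integral_by_state:
  assumes rho: "\<rho> > 0"
  shows "(\<integral>\<^sup>+\<omega>. (\<integral>\<^sup>+u. indicator {u. 0 \<le> u \<and> ereal u < anc_tau \<rho> x0 \<omega>} u
                    * of_nat (snd (snd (anc_pos \<rho> x0 \<omega> u))) \<partial>lborel) \<partial>anc_driver)
       = (\<integral>\<^sup>+y. (\<integral>\<^sup>+u\<in>{0..}. of_nat (snd (snd y))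
                    * emeasure anc_driver {\<omega> \<in> space anc_driver. anc_pos \<rho> x0 \<omega> u = y} \<partial>lborel)
          \<partial>count_space (UNIV - {(0, 0, 0)} - anc_S))"
proof -
  let ?I = "UNIV - {(0, 0, 0)} - anc_S"
  let ?f = "\<lambda>y \<omega> u. of_nat (snd (snd y)) * indicator {0..} u
              * indicator {\<omega> \<in> space anc_driver. anc_pos \<rho> x0 \<omega> u = y} \<omega> :: ennreal"
  interpret D: prob_space anc_driver by (rule prob_space_anc_driver)
  interpret pair_sigma_finite anc_driver lborel ..
  have pos_sets[measurable]: "{\<omega> \<in> space anc_driver. anc_pos \<rho> x0 \<omega> u = y} \<in> sets anc_driver" for u y
    by measurable
  have [measurable]: "(\<lambda>u. \<integral>\<^sup>+\<omega>. ?f y \<omega> u \<partial>anc_driver) \<in> borel_measurable lborel" for y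
    by measurable
  have "(\<integral>\<^sup>+\<omega>. (\<integral>\<^sup>+u. indicator {u. 0 \<le> u \<and> ereal u < anc_tau \<rho> x0 \<omega>} u
                    * of_nat (snd (snd (anc_pos \<rho> x0 \<omega> u))) \<partial>lborel) \<partial>anc_driver)
      = (\<integral>\<^sup>+\<omega>. (\<integral>\<^sup>+u. indicator {0..} u * anc_c_off_S (anc_pos \<rho> x0 \<omega> u) \<partial>lborel) \<partial>anc_driver)"
    using AE_anc_sample_path[OF rho]
    by (intro nn_integral_cong_AE)
      (auto elim!: eventually_mono intro!: nn_integral_cong simp: anc_sample_path.occupation_before_tau)
  also have "\<dots> = (\<integral>\<^sup>+u. (\<integral>\<^sup>+\<omega>. indicator {0..} u * anc_c_off_S (anc_pos \<rho> x0 \<omega> u) \<partial>anc_driver) \<partial>lborel)"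
  proof -
    have "(\<lambda>(\<omega>, u). indicator {0..} u * anc_c_off_S (anc_pos \<rho> x0 \<omega> u))
        \<in> borel_measurable (anc_driver \<Otimes>\<^sub>M lborel)"
      unfolding split_beta' by measurable
    from Fubini'[OF this] show ?thesis by simp
  qed
  also have "\<dots> = (\<integral>\<^sup>+u. (\<integral>\<^sup>+\<omega>. (\<integral>\<^sup>+y. ?f y \<omega> u \<partial>count_space ?I) \<partial>anc_driver) \<partial>lborel)"
    by (intro nn_integral_cong)
      (simp add: anc_c_off_S_as_state_sum nn_integral_cmult[symmetric] mult_ac indicator_def)
  also have "\<dots> = (\<integral>\<^sup>+y. (\<integral>\<^sup>+u. (\<integral>\<^sup>+\<omega>. ?f y \<omega> u \<partial>anc_driver) \<partial>lborel) \<partial>count_space ?I)"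
    by (simp add: nn_integral_count_space_nn_integral)
  also have "\<dots> = (\<integral>\<^sup>+y. (\<integral>\<^sup>+u\<in>{0..}. of_nat (snd (snd y))
                    * emeasure anc_driver {\<omega> \<in> space anc_driver. anc_pos \<rho> x0 \<omega> u = y} \<partial>lborel)
          \<partial>count_space ?I)"
    by (intro nn_integral_cong) (subst nn_integral_cmult_indicator[OF pos_sets], simp add: mult_ac)
  finally show ?thesis .
qed

theorem corollary5p3:
  fixes \<rho> :: real and l m n :: nat
  assumes "\<rho> > 0" and "n + min l m \<ge> 1"
  shows "(\<integral>\<^sup>+\<omega>. anc_nrec \<rho> (l, m, n) \<omega> (anc_tau \<rho> (l, m, n) \<omega>) \<partial>anc_driver)
           = ennreal (\<rho> / 2) *
             (\<integral>\<^sup>+\<omega>. (\<integral>\<^sup>+u. indicator {u. 0 \<le> u \<and> ereal u < anc_tau \<rho> (l, m, n) \<omega>} u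
                        * of_nat (snd (snd (anc_pos \<rho> (l, m, n) \<omega> u))) \<partial>lborel) \<partial>anc_driver)
       \<and> ennreal (\<rho> / 2) *
             (\<integral>\<^sup>+\<omega>. (\<integral>\<^sup>+u. indicator {u. 0 \<le> u \<and> ereal u < anc_tau \<rho> (l, m, n) \<omega>} u
                        * of_nat (snd (snd (anc_pos \<rho> (l, m, n) \<omega> u))) \<partial>lborel) \<partial>anc_driver)
           = ennreal (\<rho> / 2) *
             (\<integral>\<^sup>+y. (\<integral>\<^sup>+u\<in>{0..}. of_nat (snd (snd y))
                        * emeasure anc_driver {\<omega> \<in> space anc_driver. anc_pos \<rho> (l, m, n) \<omega> u = y}
                      \<partial>lborel)
              \<partial>count_space (UNIV - {(0, 0, 0)} - anc_S))"
  using expected_recombinations_before_tau[OF assms(1)] occupation_integral_by_state[OF assms(1)]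
  by simp

end
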